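(* There exists an absolute constant $c>0$ such that the following holds. Let $(\mathsf{CAL}_T)_{T\ge1}$ be calibration measures and $\varepsilon:\mathbb Z_{>0}\to[0,\infty)$ a function such that for every positive integer $T$: (1) (Actionability) for every decision task $Z=(A,U)$ with $U:A\times\{0,1\}\to[0,1]$ and every $\alpha\ge0$ there exists a randomized response function $r_{Z,\alpha}:[0,1]\to\Delta(A)$ (not depending on the distribution) such that every distribution $\mathcal D$ on $[0,1]\times\{0,1\}$ with $\mathsf{CAL}_T(\mathcal D)\le\alpha$ satisfies $\mathsf{SR}_Z(r_{Z,\alpha},\mathcal D)\le\alpha$; and (2) (Testability) for every calibrated distribution $\mathcal D$ on $[0,1]\times\{0,1\}$, if $S_T$ is the uniform distribution over $T$ i.i.d. samples from $\mathcal D$, then $\mathbb E[\mathsf{CAL}_T(S_T)]\le\varepsilon(T)$. Then $\varepsilon(T)\ge c\,T^{-1/2}$ for every positive integer $T$.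
   Context: A calibration measure $\mathsf{CAL}_T$ assigns a nonnegative real number to each distribution of pairs $(p,y)\in[0,1]\times\{0,1\}$ (in particular to uniform distributions over finite samples). A distribution of $(p,y)$ is calibrated if $\mathbb E[y\mid p]=p$. A decision task $Z=(A,U)$ consists of an action set $A$ and a utility function $U:A\times\{0,1\}\to[0,1]$. For a randomized response function $r:[0,1]\to\Delta(A)$ and a distribution $\mathcal D$ on $[0,1]\times\{0,1\}$, the swap regret is $\mathsf{SR}_Z(r,\mathcal D)=\sup_{\sigma:A\to A}\mathbb E_{(p,y)\sim\mathcal D,\,a\sim r(p)}[U(\sigma(a),y)-U(a,y)]$. *)

theory Defs
  imports "HOL-Probability.Probability"
begin

text \<open>Distributions of pairs (p,y) in [0,1] x {0,1}; the label y is encoded as a bool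
  (True = 1). Distributions are represented as (discrete) pmfs.\<close>

definition valid_dist :: "(real \<times> bool) pmf \<Rightarrow> bool" where
  "valid_dist D \<longleftrightarrow> (\<forall>x\<in>set_pmf D. fst x \<in> {0..1})"

text \<open>Calibration: E[y | p] = p, i.e. P(p, y=1) = p * P(p) for every value p.\<close>
definition calibrated :: "(real \<times> bool) pmf \<Rightarrow> bool" where
  "calibrated D \<longleftrightarrow>
     (\<forall>p. measure_pmf.prob D {(p, True)} = p * measure_pmf.prob D ({p} \<times> UNIV))"

definition decision_task :: "nat set \<Rightarrow> (nat \<Rightarrow> bool \<Rightarrow> real) \<Rightarrow> bool" where
  "decision_task A U \<longleftrightarrow> finite A \<and> A \<noteq> {} \<and> (\<forall>a\<in>A. \<forall>y. U a y \<in> {0..1})"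

definition response_fun :: "nat set \<Rightarrow> (real \<Rightarrow> nat pmf) \<Rightarrow> bool" where
  "response_fun A r \<longleftrightarrow> (\<forall>p\<in>{0..1}. set_pmf (r p) \<subseteq> A)"

definition swap_regret ::
  "nat set \<Rightarrow> (nat \<Rightarrow> bool \<Rightarrow> real) \<Rightarrow> (real \<Rightarrow> nat pmf) \<Rightarrow> (real \<times> bool) pmf \<Rightarrow> real" where
  "swap_regret A U r D =
     (SUP \<sigma>\<in>{\<sigma>. \<forall>a\<in>A. \<sigma> a \<in> A}.
        measure_pmf.expectation D
          (\<lambda>(p, y). measure_pmf.expectation (r p) (\<lambda>a. U (\<sigma> a) y - U a y)))"

definition empirical :: "(real \<times> bool) list \<Rightarrow> (real \<times> bool) pmf" where
  "empirical xs = pmf_of_multiset (mset xs)"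

end

theory Submission
  imports Defs
begin

(* Take the calibrated distribution that always predicts 1/2 with a fair-coin label, and the task
   of guessing the label. On a sample with label imbalance q = (#ones - #zeros) / T, a response
   that guesses 1 at 1/2 with probability w has regret (1 - w) q against always guessing 1 and
   -w q against always guessing 0, and the mirror image of the sample (labels flipped) has
   imbalance -q. So no single response has swap regret below |q|/2 on both, and actionability
   forces CAL_T of the sample or of its mirror image to be at least |q|/2. Both have the same
   law, hence E CAL_T >= E |q| / 4, and a fourth-moment bound for Rademacher sums gives
   E |q| >= 3 / (4 sqrt (2 T)). *)

section \<open>Expectations over samples\<close>

lemma empirical_conv_nth:
  assumes "xs \<noteq> []"
  shows "empirical xs = map_pmf ((!) xs) (pmf_of_set {..<length xs})"
proof -
  have "mset xs = image_mset ((!) xs) (mset_set {..<length xs})"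
    by (metis map_nth mset_map mset_upt lessThan_atLeast0)
  moreover have "{..<length xs} \<noteq> {}"
    using assms by auto
  ultimately show ?thesis
    by (simp add: empirical_def map_pmf_of_set)
qed

lemma expectation_empirical:
  fixes h :: "real \<times> bool \<Rightarrow> real"
  assumes "xs \<noteq> []"
  shows "measure_pmf.expectation (empirical xs) h = sum_list (map h xs) / length xs"
proof -
  have "{..<length xs} \<noteq> {}"
    using assms by auto
  then show ?thesis
    using assms by (simp add: empirical_conv_nth integral_pmf_of_set sum_list_sum_nth atLeast0LessThan)
qed

lemma finite_set_replicate_pmf:
  assumes "finite (set_pmf p)"
  shows "finite (set_pmf (replicate_pmf n p))"
proof -
  have "finite {xs. set xs \<subseteq> set_pmf p \<and> length xs = n}"
    using assms by (rule finite_lists_length_eq)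
  then show ?thesis
    by (simp add: set_replicate_pmf lists_eq_set)
qed

lemma replicate_pmf_map_pmf:
  "replicate_pmf n (map_pmf f p) = map_pmf (map f) (replicate_pmf n p)"
  by (induction n) (simp_all add: map_pmf_def bind_assoc_pmf bind_return_pmf)

lemma abs_expectation_le:
  fixes f :: "'a \<Rightarrow> real"
  assumes "\<And>x. x \<in> set_pmf M \<Longrightarrow> \<bar>f x\<bar> \<le> B"
  shows "\<bar>measure_pmf.expectation M f\<bar> \<le> B"
proof -
  have "integrable M f"
    using assms by (intro measure_pmf.integrable_const_bound[where B=B]) (auto simp: AE_measure_pmf_iff)
  then have "integrable M (\<lambda>x. \<bar>f x\<bar>)"
    by simp
  have "\<bar>measure_pmf.expectation M f\<bar> \<le> measure_pmf.expectation M (\<lambda>x. \<bar>f x\<bar>)"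
    by (rule integral_abs_bound)
  also have "\<dots> \<le> B"
    using \<open>integrable M (\<lambda>x. \<bar>f x\<bar>)\<close> assms
    by (intro measure_pmf.integral_le_const) (auto simp: AE_measure_pmf_iff)
  finally show ?thesis .
qed

lemma expectation_le_of_nn_integral_le:
  fixes f :: "'a \<Rightarrow> real"
  assumes "integrable M f" "AE x in M. 0 \<le> f x"
    and "(\<integral>\<^sup>+ x. ennreal (f x) \<partial>M) \<le> ennreal e" "0 \<le> e"
  shows "integral\<^sup>L M f \<le> e"
  using assms by (simp add: nn_integral_eq_integral ennreal_le_iff)

section \<open>Rademacher sums\<close>

abbreviation fair_coins :: "nat \<Rightarrow> bool list pmf" where
  "fair_coins n \<equiv> replicate_pmf n (bernoulli_pmf (1/2))"

definition spin :: "bool \<Rightarrow> real" where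
  "spin b = (if b then 1 else -1)"

definition rademacher_sum :: "bool list \<Rightarrow> real" where
  "rademacher_sum bs = sum_list (map spin bs)"

lemma rademacher_sum_Nil [simp]: "rademacher_sum [] = 0"
  by (simp add: rademacher_sum_def)

lemma rademacher_sum_Cons [simp]: "rademacher_sum (b # bs) = spin b + rademacher_sum bs"
  by (simp add: rademacher_sum_def)

lemma rademacher_sum_map_Not: "rademacher_sum (map Not bs) = - rademacher_sum bs"
  by (induction bs) (simp_all add: spin_def)

lemma integrable_fair_coins [simp]:
  "integrable (measure_pmf (fair_coins n)) (f :: bool list \<Rightarrow> real)"
  by (rule integrable_measure_pmf_finite) (simp add: finite_set_replicate_pmf)

lemma map_pmf_Not_fair_coin: "map_pmf Not (bernoulli_pmf (1/2)) = bernoulli_pmf (1/2)"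
  unfolding bernoulli_pmf_half_conv_pmf_of_set
  by (rule map_pmf_of_set_bij_betw) (auto simp: bij_betw_def inj_def)

lemma map_pmf_Not_fair_coins: "map_pmf (map Not) (fair_coins n) = fair_coins n"
  by (simp flip: replicate_pmf_map_pmf add: map_pmf_Not_fair_coin)

lemma expectation_fair_coins_Suc:
  fixes f :: "bool list \<Rightarrow> real"
  shows "measure_pmf.expectation (fair_coins (Suc n)) f =
    measure_pmf.expectation (fair_coins n) (\<lambda>bs. (f (True # bs) + f (False # bs)) / 2)"
proof -
  have "fair_coins (Suc n) = bernoulli_pmf (1/2) \<bind> (\<lambda>b. map_pmf (Cons b) (fair_coins n))"
    by (simp add: map_pmf_def)
  then have "measure_pmf.expectation (fair_coins (Suc n)) f =
      (measure_pmf.expectation (fair_coins n) (\<lambda>bs. f (True # bs)) +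
       measure_pmf.expectation (fair_coins n) (\<lambda>bs. f (False # bs))) / 2"
    by (simp only:) (simp add: pmf_expectation_bind[where A=UNIV] finite_set_replicate_pmf UNIV_bool)
  then show ?thesis
    by simp
qed

lemma expectation_rademacher_sum_square:
  "measure_pmf.expectation (fair_coins n) (\<lambda>bs. rademacher_sum bs ^ 2) = n"
proof (induction n)
  case 0
  then show ?case by simp
next
  case (Suc n)
  have "measure_pmf.expectation (fair_coins (Suc n)) (\<lambda>bs. rademacher_sum bs ^ 2) =
      measure_pmf.expectation (fair_coins n) (\<lambda>bs. rademacher_sum bs ^ 2 + 1)"
    unfolding expectation_fair_coins_Suc
    by (rule Bochner_Integration.integral_cong) (simp_all add: spin_def power2_eq_square algebra_simps)
  then show ?case
    by (simp add: Suc)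
qed

lemma expectation_rademacher_sum_pow4:
  "measure_pmf.expectation (fair_coins n) (\<lambda>bs. rademacher_sum bs ^ 4) = 3 * real n ^ 2 - 2 * real n"
proof (induction n)
  case 0
  then show ?case by simp
next
  case (Suc n)
  let ?S = rademacher_sum
  have "measure_pmf.expectation (fair_coins (Suc n)) (\<lambda>bs. ?S bs ^ 4) =
      measure_pmf.expectation (fair_coins n) (\<lambda>bs. ?S bs ^ 4 + 6 * ?S bs ^ 2 + 1)"
    unfolding expectation_fair_coins_Suc
    by (rule Bochner_Integration.integral_cong) (simp_all add: spin_def power4_eq_xxxx power2_eq_square algebra_simps)
  also have "\<dots> = 3 * real (Suc n) ^ 2 - 2 * real (Suc n)"
    by (simp add: Suc expectation_rademacher_sum_square) (simp add: power2_eq_square algebra_simps)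
  finally show ?case .
qed

lemma abs_ge_quartic_minorant:
  fixes x t :: real
  assumes "t > 0"
  shows "3 / (2 * t) * x ^ 2 - x ^ 4 / (2 * t ^ 3) \<le> \<bar>x\<bar>"
proof -
  have "0 \<le> \<bar>x\<bar> * (\<bar>x\<bar> - t) ^ 2 * (\<bar>x\<bar> + 2 * t)"
    using assms by simp
  also have "\<dots> = 2 * t ^ 3 * \<bar>x\<bar> - 3 * t ^ 2 * x ^ 2 + x ^ 4"
    by (simp add: power2_eq_square power3_eq_cube power4_eq_xxxx algebra_simps abs_mult_self_eq
        flip: abs_mult)
  finally show ?thesis
    using assms by (simp add: field_simps power3_eq_cube power2_eq_square)
qed

lemma expectation_abs_rademacher_sum_ge:
  assumes "n \<ge> 1"
  shows "3 / (4 * sqrt 2) * sqrt n \<le> measure_pmf.expectation (fair_coins n) (\<lambda>bs. \<bar>rademacher_sum bs\<bar>)"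
proof -
  define t where "t = sqrt (2 * n)"
  have "t > 0" and t_sq: "t ^ 2 = 2 * n"
    using assms by (simp_all add: t_def)
  let ?E = "measure_pmf.expectation (fair_coins n)" and ?S = rademacher_sum
  have "3 / (4 * sqrt 2) * sqrt n = 3 * real n / (2 * t) - 3 * real n ^ 2 / (2 * t ^ 3)"
    using assms by (simp add: t_sq t_def power3_eq_cube real_sqrt_mult field_simps power2_eq_square)
  also have "\<dots> \<le> 3 * real n / (2 * t) - (3 * real n ^ 2 - 2 * real n) / (2 * t ^ 3)"
    using \<open>t > 0\<close> by (intro diff_left_mono divide_right_mono) simp_all
  also have "\<dots> = ?E (\<lambda>bs. 3 / (2 * t) * ?S bs ^ 2 - ?S bs ^ 4 / (2 * t ^ 3))"
    by (simp add: expectation_rademacher_sum_square expectation_rademacher_sum_pow4)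
  also have "\<dots> \<le> ?E (\<lambda>bs. \<bar>?S bs\<bar>)"
    using abs_ge_quartic_minorant[OF \<open>t > 0\<close>] by (intro integral_mono) simp_all
  finally show ?thesis .
qed

section \<open>Swap regret in the label-guessing task\<close>

lemma swap_regret_ge_fixed_action:
  assumes "decision_task A U" "response_fun A r" "valid_dist D" "c \<in> A"
  shows "measure_pmf.expectation D (\<lambda>(p, y). measure_pmf.expectation (r p) (\<lambda>a. U c y - U a y))
           \<le> swap_regret A U r D"
proof -
  let ?regret = "\<lambda>\<sigma>. measure_pmf.expectation D
      (\<lambda>(p, y). measure_pmf.expectation (r p) (\<lambda>a. U (\<sigma> a) y - U a y))"
  have "\<bar>?regret \<sigma>\<bar> \<le> 1" if "\<forall>a\<in>A. \<sigma> a \<in> A" for \<sigma>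
  proof (rule abs_expectation_le, clarify, rule abs_expectation_le)
    fix p y a
    assume "(p, y) \<in> set_pmf D" "a \<in> set_pmf (r p)"
    moreover have "p \<in> {0..1}"
      using assms(3) \<open>(p, y) \<in> set_pmf D\<close> by (force simp: valid_dist_def)
    ultimately have "a \<in> A"
      using assms(2) by (auto simp: response_fun_def)
    then have "U (\<sigma> a) y \<in> {0..1}" "U a y \<in> {0..1}"
      using assms(1) that by (auto simp: decision_task_def)
    then show "\<bar>U (\<sigma> a) y - U a y\<bar> \<le> 1"
      by auto
  qed
  then have "bdd_above (?regret ` {\<sigma>. \<forall>a\<in>A. \<sigma> a \<in> A})"
    by (intro bdd_aboveI2[where M=1]) (auto simp: abs_le_iff)
  then have "?regret (\<lambda>_. c) \<le> (SUP \<sigma>\<in>{\<sigma>. \<forall>a\<in>A. \<sigma> a \<in> A}. ?regret \<sigma>)"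
    using assms(4) by (intro cSUP_upper) simp_all
  then show ?thesis
    by (simp only: swap_regret_def)
qed

definition guess_utility :: "nat \<Rightarrow> bool \<Rightarrow> real" where
  "guess_utility a y = (if (a = 1) = y then 1 else 0)"

lemma decision_task_guess_utility: "decision_task {0, 1} guess_utility"
  by (auto simp: decision_task_def guess_utility_def)

definition sample_at_half :: "bool list \<Rightarrow> (real \<times> bool) list" where
  "sample_at_half bs = map (Pair (1/2)) bs"

lemma valid_dist_empirical_sample_at_half:
  "bs \<noteq> [] \<Longrightarrow> valid_dist (empirical (sample_at_half bs))"
  by (auto simp: valid_dist_def empirical_def sample_at_half_def)

lemma guess_regret_sample_at_half:
  assumes "bs \<noteq> []"
  shows "measure_pmf.expectation (empirical (sample_at_half bs))
           (\<lambda>(p, y). measure_pmf.expectation (r p) (\<lambda>a. guess_utility c y - guess_utility a y))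
       = (guess_utility c True - measure_pmf.expectation (r (1/2)) (\<lambda>a. guess_utility a True))
           * rademacher_sum bs / length bs"
proof -
  have integrable: "integrable (r p) (\<lambda>a. guess_utility a True)" for p
    by (intro measure_pmf.integrable_const_bound[where B=1]) (auto simp: guess_utility_def)
  have guess_False: "guess_utility a False = 1 - guess_utility a True" for a
    by (simp add: guess_utility_def)
  have "measure_pmf.expectation (r p) (\<lambda>a. guess_utility c y - guess_utility a y)
      = spin y * (guess_utility c True - measure_pmf.expectation (r p) (\<lambda>a. guess_utility a True))" for p y
    by (cases y) (simp_all add: spin_def guess_False integrable)
  then show ?thesis
    using assms
    by (simp add: expectation_empirical sample_at_half_def rademacher_sum_def o_def
        sum_list_mult_const)
qed

lemma abs_rademacher_sum_le_swap_regret: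
  assumes r: "response_fun {0, 1} r" and "bs \<noteq> []"
    and regret: "swap_regret {0, 1} guess_utility r (empirical (sample_at_half bs)) \<le> \<alpha>"
      "swap_regret {0, 1} guess_utility r (empirical (sample_at_half (map Not bs))) \<le> \<alpha>"
  shows "\<bar>rademacher_sum bs\<bar> / length bs \<le> 2 * \<alpha>"
proof -
  define w where "w = measure_pmf.expectation (r (1/2)) (\<lambda>a. guess_utility a True)"
  define q where "q = rademacher_sum bs / length bs"
  have fixed_action: "(guess_utility c True - w) * rademacher_sum xs / length xs \<le> \<alpha>"
    if "c \<in> {0, 1}" and "xs \<in> {bs, map Not bs}" for c xs
  proof -
    have xs: "xs \<noteq> []" and "swap_regret {0, 1} guess_utility r (empirical (sample_at_half xs)) \<le> \<alpha>"
      using that \<open>bs \<noteq> []\<close> regret by auto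
    with swap_regret_ge_fixed_action[OF decision_task_guess_utility r
        valid_dist_empirical_sample_at_half[OF xs] \<open>c \<in> {0, 1}\<close>]
    show ?thesis
      unfolding w_def guess_regret_sample_at_half[OF xs] by linarith
  qed
  have "(1 - w) * q \<le> \<alpha>" "w * q \<le> \<alpha>" "(1 - w) * - q \<le> \<alpha>" "w * - q \<le> \<alpha>"
    using fixed_action[of 1 bs] fixed_action[of 0 "map Not bs"]
      fixed_action[of 1 "map Not bs"] fixed_action[of 0 bs]
    by (simp_all add: guess_utility_def rademacher_sum_map_Not q_def)
  then have "\<bar>q\<bar> \<le> 2 * \<alpha>"
    by (simp add: abs_le_iff algebra_simps)
  then show ?thesis
    by (simp add: q_def)
qed

definition half_coin :: "(real \<times> bool) pmf" where
  "half_coin = map_pmf (Pair (1/2)) (bernoulli_pmf (1/2))"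

lemma valid_dist_half_coin: "valid_dist half_coin"
  by (simp add: valid_dist_def half_coin_def)

lemma calibrated_half_coin: "calibrated half_coin"
  unfolding calibrated_def
proof
  fix p :: real
  have "Pair (1/2) -` {(p, True)} = (if p = 1/2 then {True} else {})"
    and "Pair (1/2) -` ({p} \<times> UNIV) = (if p = 1/2 then UNIV else {})"
    by auto
  then show "measure_pmf.prob half_coin {(p, True)} = p * measure_pmf.prob half_coin ({p} \<times> UNIV)"
    unfolding half_coin_def measure_map_pmf by (simp add: measure_pmf_single)
qed

lemma replicate_pmf_half_coin: "replicate_pmf n half_coin = map_pmf sample_at_half (fair_coins n)"
  by (simp add: half_coin_def replicate_pmf_map_pmf sample_at_half_def[abs_def])

lemma abs_rademacher_sum_le_calibration_error:
  fixes CAL :: "(real \<times> bool) pmf \<Rightarrow> real"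
  assumes nonneg: "\<And>D. valid_dist D \<Longrightarrow> 0 \<le> CAL D"
    and actionable: "\<And>\<alpha>. \<alpha> \<ge> 0 \<Longrightarrow> \<exists>r. response_fun {0, 1} r \<and>
        (\<forall>D. valid_dist D \<and> CAL D \<le> \<alpha> \<longrightarrow> swap_regret {0, 1} guess_utility r D \<le> \<alpha>)"
    and "bs \<noteq> []"
  shows "\<bar>rademacher_sum bs\<bar> / length bs
    \<le> 2 * (CAL (empirical (sample_at_half bs)) + CAL (empirical (sample_at_half (map Not bs))))"
proof -
  define F where "F bs = CAL (empirical (sample_at_half bs))" for bs
  have "map Not bs \<noteq> []"
    using \<open>bs \<noteq> []\<close> by simp
  with \<open>bs \<noteq> []\<close> have F_nonneg: "0 \<le> F bs" "0 \<le> F (map Not bs)"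
    unfolding F_def by (simp_all add: nonneg valid_dist_empirical_sample_at_half)
  define \<alpha> where "\<alpha> = max (F bs) (F (map Not bs))"
  have "\<alpha> \<ge> 0"
    using F_nonneg by (simp add: \<alpha>_def)
  then obtain r where "response_fun {0, 1} r"
    and "\<forall>D. valid_dist D \<and> CAL D \<le> \<alpha> \<longrightarrow> swap_regret {0, 1} guess_utility r D \<le> \<alpha>"
    using actionable by blast
  then have "\<bar>rademacher_sum bs\<bar> / length bs \<le> 2 * \<alpha>"
    using \<open>bs \<noteq> []\<close> \<open>map Not bs \<noteq> []\<close>
    by (intro abs_rademacher_sum_le_swap_regret)
      (auto simp: F_def \<alpha>_def valid_dist_empirical_sample_at_half)
  then show ?thesis
    using F_nonneg by (simp add: F_def[symmetric] \<alpha>_def)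
qed

lemma expectation_calibration_error_ge:
  fixes CAL :: "(real \<times> bool) pmf \<Rightarrow> real"
  assumes nonneg: "\<And>D. valid_dist D \<Longrightarrow> 0 \<le> CAL D"
    and actionable: "\<And>\<alpha>. \<alpha> \<ge> 0 \<Longrightarrow> \<exists>r. response_fun {0, 1} r \<and>
        (\<forall>D. valid_dist D \<and> CAL D \<le> \<alpha> \<longrightarrow> swap_regret {0, 1} guess_utility r D \<le> \<alpha>)"
    and "n \<ge> 1"
  shows "3 / (16 * sqrt 2) / sqrt n
    \<le> measure_pmf.expectation (fair_coins n) (\<lambda>bs. CAL (empirical (sample_at_half bs)))"
proof -
  define F where "F bs = CAL (empirical (sample_at_half bs))" for bs
  let ?E = "measure_pmf.expectation (fair_coins n)"
  have "\<bar>rademacher_sum bs\<bar> / n \<le> 2 * (F bs + F (map Not bs))"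
    if "bs \<in> set_pmf (fair_coins n)" for bs
  proof -
    have "length bs = n"
      using that by (simp add: set_replicate_pmf)
    with \<open>n \<ge> 1\<close> have "bs \<noteq> []"
      by auto
    with \<open>length bs = n\<close> show ?thesis
      unfolding F_def using abs_rademacher_sum_le_calibration_error[OF nonneg actionable \<open>bs \<noteq> []\<close>]
      by simp
  qed
  then have "?E (\<lambda>bs. \<bar>rademacher_sum bs\<bar> / n) \<le> ?E (\<lambda>bs. 2 * (F bs + F (map Not bs)))"
    by (intro integral_mono_AE) (simp_all add: AE_measure_pmf_iff)
  also have "\<dots> = 4 * ?E F"
    using integral_map_pmf[of "map Not" "fair_coins n" F] by (simp add: map_pmf_Not_fair_coins)
  finally have "?E (\<lambda>bs. \<bar>rademacher_sum bs\<bar>) / (4 * n) \<le> ?E F"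
    by (simp add: field_simps)
  have "3 / (16 * sqrt 2) / sqrt n = 3 / (4 * sqrt 2) * sqrt n / (4 * n)"
    using \<open>n \<ge> 1\<close> by (simp add: field_simps real_sqrt_mult real_sqrt_mult_self)
  also have "\<dots> \<le> ?E (\<lambda>bs. \<bar>rademacher_sum bs\<bar>) / (4 * n)"
    using \<open>n \<ge> 1\<close> by (intro divide_right_mono expectation_abs_rademacher_sum_ge) simp_all
  also have "\<dots> \<le> ?E F"
    by fact
  finally show ?thesis
    unfolding F_def .
qed

theorem theorem8p1:
  "\<exists>c>0. \<forall>(CAL :: nat \<Rightarrow> (real \<times> bool) pmf \<Rightarrow> real) (\<epsilon> :: nat \<Rightarrow> real).
     ((\<forall>T\<ge>1. \<forall>D. valid_dist D \<longrightarrow> CAL T D \<ge> 0)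
      \<and> (\<forall>T\<ge>1. \<epsilon> T \<ge> 0)
      \<and> (\<forall>T\<ge>1. \<forall>A U \<alpha>. decision_task A U \<and> \<alpha> \<ge> 0 \<longrightarrow>
            (\<exists>r. response_fun A r \<and>
                 (\<forall>D. valid_dist D \<and> CAL T D \<le> \<alpha> \<longrightarrow> swap_regret A U r D \<le> \<alpha>)))
      \<and> (\<forall>T\<ge>1. \<forall>D. valid_dist D \<and> calibrated D \<longrightarrow>
            (\<integral>\<^sup>+ xs. ennreal (CAL T (empirical xs)) \<partial>measure_pmf (replicate_pmf T D))
              \<le> ennreal (\<epsilon> T)))
     \<longrightarrow> (\<forall>T::nat. T \<ge> 1 \<longrightarrow> \<epsilon> T \<ge> c / sqrt (real T))"
proof (intro exI[of _ "3 / (16 * sqrt 2)"] conjI allI impI, goal_cases)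
  case 1
  then show ?case by simp
next
  case (2 CAL \<epsilon> T)
  then have "T \<ge> 1" and nonneg: "\<And>D. valid_dist D \<Longrightarrow> 0 \<le> CAL T D" and "\<epsilon> T \<ge> 0"
    and testable: "(\<integral>\<^sup>+ xs. ennreal (CAL T (empirical xs)) \<partial>replicate_pmf T half_coin) \<le> ennreal (\<epsilon> T)"
    using valid_dist_half_coin calibrated_half_coin by blast+
  let ?F = "\<lambda>bs. CAL T (empirical (sample_at_half bs))"
  have "3 / (16 * sqrt 2) / sqrt T \<le> measure_pmf.expectation (fair_coins T) ?F"
    using 2 decision_task_guess_utility by (intro expectation_calibration_error_ge) blast+
  also have "\<dots> \<le> \<epsilon> T"
  proof (rule expectation_le_of_nn_integral_le)
    have "bs \<noteq> []" if "bs \<in> set_pmf (fair_coins T)" for bs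
      using that \<open>T \<ge> 1\<close> by (auto simp: set_replicate_pmf)
    then show "AE bs in fair_coins T. 0 \<le> ?F bs"
      by (simp add: AE_measure_pmf_iff nonneg valid_dist_empirical_sample_at_half)
    show "(\<integral>\<^sup>+ bs. ennreal (?F bs) \<partial>fair_coins T) \<le> ennreal (\<epsilon> T)"
      using testable by (simp add: replicate_pmf_half_coin)
  qed (simp_all add: \<open>\<epsilon> T \<ge> 0\<close>)
  finally show ?case .
qed

end
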